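(* Let $G=(V,E)$ be a multigraph with $|V|=s\ge 2$ and $|E|=m$. For every integer $g\ge 1$ satisfying $m\ge 2s+g+1$, there exists a subset of vertices $S\subseteq V$ with $|S|\le 8g\log(s)$ that spans at least $|S|+g$ edges.
   Context: A multigraph is a graph that may contain parallel edges and (possibly parallel) self-loops; edges are counted with multiplicity. A set of vertices $S$ spans an edge if all endpoints of the edge lie in $S$ (a self-loop at $v$ is spanned iff $v\in S$). Logarithms are base 2. *)

theory Defs
  imports Complex_Main
begin

text \<open>Parallel edges are
  distinct edge names with the same endpoints, so edges are counted with multiplicity.\<close>

definition multigraph :: "'a set \<Rightarrow> 'e set \<Rightarrow> ('e \<Rightarrow> 'a \<times> 'a) \<Rightarrow> bool" where
  "multigraph V E ends \<longleftrightarrow> finite V \<and> finite E \<and>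
     (\<forall>e\<in>E. fst (ends e) \<in> V \<and> snd (ends e) \<in> V)"

definition spanned_edges :: "'e set \<Rightarrow> ('e \<Rightarrow> 'a \<times> 'a) \<Rightarrow> 'a set \<Rightarrow> nat" where
  "spanned_edges E ends S = card {e\<in>E. fst (ends e) \<in> S \<and> snd (ends e) \<in> S}"

end

theory Submission
  imports Defs "HOL-Library.Log_Nat"
begin

text \<open>Deleting a vertex of degree at most 2 keeps m \<ge> 2s + g + 1, so we may pass to a subgraph W
  of minimum degree 3 whose excess |E(W)| - |W| is at least g. Fix D with |W| < 2^D and grow a
  set R, starting from the empty set, until its excess reaches g, spending at most 2D + 1
  vertices per unit of excess. If an edge leaves R, breadth-first search from R meets an edge
  outside its search tree within D layers, because otherwise minimum degree 3 makes the layers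
  double; adding the tree paths to both endpoints of that edge costs at most 2D vertices and
  raises the excess by one. If no edge leaves R, then R itself has minimum degree 3, so
  |R| \<le> 2 excess(R), and adding any vertex lowers the excess by at most one. The result has
  at most (2D + 1)(g + 1) + 1 \<le> 8 g log s vertices.\<close>

definition endpoints :: "('e \<Rightarrow> 'a \<times> 'a) \<Rightarrow> 'e \<Rightarrow> 'a set" where
  "endpoints ends e = {fst (ends e), snd (ends e)}"

definition edges_within :: "'e set \<Rightarrow> ('e \<Rightarrow> 'a \<times> 'a) \<Rightarrow> 'a set \<Rightarrow> 'e set" where
  "edges_within E ends S = {e\<in>E. endpoints ends e \<subseteq> S}"

text \<open>A self-loop contributes 1, not 2, to the degree of its vertex.\<close>

definition degree :: "'e set \<Rightarrow> ('e \<Rightarrow> 'a \<times> 'a) \<Rightarrow> 'a \<Rightarrow> nat" where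
  "degree E ends u = card {e\<in>E. u \<in> endpoints ends e}"

lemma spanned_edges_eq_card_edges_within:
  "spanned_edges E ends S = card (edges_within E ends S)"
  by (simp add: spanned_edges_def edges_within_def endpoints_def)

lemma finite_edges_within [simp]: "finite E \<Longrightarrow> finite (edges_within E ends S)"
  by (simp add: edges_within_def)

lemma edges_within_mono: "S \<subseteq> T \<Longrightarrow> edges_within E ends S \<subseteq> edges_within E ends T"
  by (auto simp: edges_within_def)

lemma edges_within_edges_within:
  "edges_within (edges_within E ends W) ends S = edges_within E ends (W \<inter> S)"
  by (auto simp: edges_within_def)

lemma edges_within_empty [simp]: "edges_within E ends {} = {}"
  by (auto simp: edges_within_def endpoints_def)

lemma min_degree_three_subgraph_exists:
  fixes E :: "'e set" and ends :: "'e \<Rightarrow> 'a \<times> 'a"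
  assumes "finite E" and "finite V" and "2 * card V + k \<le> card (edges_within E ends V)"
  shows "\<exists>W\<subseteq>V. 2 * card W + k \<le> card (edges_within E ends W) \<and>
           (\<forall>u\<in>W. 3 \<le> degree (edges_within E ends W) ends u)"
  using assms(2,3)
proof (induction "card V" arbitrary: V rule: less_induct)
  case less
  show ?case
  proof (cases "\<forall>u\<in>V. 3 \<le> degree (edges_within E ends V) ends u")
    case True
    then show ?thesis using less.prems by blast
  next
    case False
    then obtain u where u: "u \<in> V" "degree (edges_within E ends V) ends u \<le> 2"
      by force
    have "edges_within E ends (V - {u}) =
        edges_within E ends V - {e \<in> edges_within E ends V. u \<in> endpoints ends e}"
      by (auto simp: edges_within_def)
    then have "card (edges_within E ends (V - {u})) =
        card (edges_within E ends V) - degree (edges_within E ends V) ends u"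
      unfolding degree_def using assms(1) by (simp add: card_Diff_subset)
    moreover have "card (V - {u}) = card V - 1" "card V \<ge> 1"
      using u(1) less.prems(1) by (auto simp: Suc_le_eq card_gt_0_iff)
    ultimately have "2 * card (V - {u}) + k \<le> card (edges_within E ends (V - {u}))"
      using less.prems(2) u(2) by linarith
    then obtain W where "W \<subseteq> V - {u}" "2 * card W + k \<le> card (edges_within E ends W)"
        "\<forall>u\<in>W. 3 \<le> degree (edges_within E ends W) ends u"
      using less.hyps[of "V - {u}"] less.prems(1) \<open>card V \<ge> 1\<close> \<open>card (V - {u}) = card V - 1\<close>
      by auto
    then show ?thesis by blast
  qed
qed

locale min_degree_three =
  fixes W :: "'a set" and E :: "'e set" and ends :: "'e \<Rightarrow> 'a \<times> 'a"
  assumes finite_W: "finite W" and finite_E: "finite E"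
    and edges_in_W: "\<And>e. e \<in> E \<Longrightarrow> endpoints ends e \<subseteq> W"
    and degree_ge_3: "\<And>u. u \<in> W \<Longrightarrow> 3 \<le> degree E ends u"
begin

abbreviation es :: "'a set \<Rightarrow> 'e set" where
  "es \<equiv> edges_within E ends"

definition excess :: "'a set \<Rightarrow> int" where
  "excess S = int (card (es S)) - int (card S)"

lemma excess_empty [simp]: "excess {} = 0"
  by (simp add: excess_def)

lemma three_card_le_incidences:
  assumes "X \<subseteq> W"
  shows "3 * card X \<le> card (SIGMA u:X. {e\<in>E. u \<in> endpoints ends e})"
proof -
  have "finite X" using assms finite_W finite_subset by blast
  have "3 * card X = (\<Sum>u\<in>X. 3)" by simp
  also have "\<dots> \<le> (\<Sum>u\<in>X. degree E ends u)"
    by (rule sum_mono) (use degree_ge_3 assms in auto)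
  also have "\<dots> = card (SIGMA u:X. {e\<in>E. u \<in> endpoints ends e})"
    unfolding degree_def using \<open>finite X\<close> finite_E by (subst card_SigmaI) auto
  finally show ?thesis .
qed

lemma card_le_twice_excess_if_closed:
  assumes "R \<subseteq> W" and closed: "\<forall>e\<in>E. endpoints ends e \<inter> R \<noteq> {} \<longrightarrow> endpoints ends e \<subseteq> R"
  shows "int (card R) \<le> 2 * excess R"
proof -
  let ?I = "SIGMA u:R. {e\<in>E. u \<in> endpoints ends e}"
  let ?f = "\<lambda>(u, e). (e, u = fst (ends e))"
  have "inj_on ?f ?I"
    by (auto simp: inj_on_def endpoints_def)
  moreover have "?f ` ?I \<subseteq> es R \<times> (UNIV :: bool set)"
    using closed by (auto simp: edges_within_def)
  ultimately have "card ?I \<le> card (es R \<times> (UNIV :: bool set))"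
    using finite_E by (intro card_inj_on_le) auto
  then have "3 * card R \<le> 2 * card (es R)"
    using three_card_le_incidences[OF assms(1)] by (simp add: card_cartesian_product)
  then show ?thesis by (simp add: excess_def)
qed

end

locale bfs = min_degree_three W E ends
  for W :: "'a set" and E :: "'e set" and ends :: "'e \<Rightarrow> 'a \<times> 'a" +
  fixes R :: "'a set"
  assumes R_subset_W: "R \<subseteq> W"
    and edge_leaving_R: "\<exists>e\<in>E. endpoints ends e \<inter> R \<noteq> {} \<and> \<not> endpoints ends e \<subseteq> R"
begin

primrec nbhd :: "nat \<Rightarrow> 'a set" where
  "nbhd 0 = R"
| "nbhd (Suc k) = nbhd k \<union> \<Union> (endpoints ends ` {e\<in>E. endpoints ends e \<inter> nbhd k \<noteq> {}})"

declare nbhd.simps(2) [simp del]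

lemma nbhd_subset_W: "nbhd k \<subseteq> W"
  by (induction k) (use R_subset_W edges_in_W in \<open>auto simp: nbhd.simps(2)\<close>)

lemma finite_nbhd [simp]: "finite (nbhd k)"
  using nbhd_subset_W finite_W finite_subset by blast

lemma nbhd_mono: "k \<le> l \<Longrightarrow> nbhd k \<subseteq> nbhd l"
  by (rule lift_Suc_mono_le[of nbhd]) (auto simp: nbhd.simps(2))

lemma R_subset_nbhd: "R \<subseteq> nbhd k"
  using nbhd_mono[of 0 k] by simp

lemma R_nonempty: "R \<noteq> {}"
  using edge_leaving_R by blast

definition depth :: "'a \<Rightarrow> nat" where
  "depth u = (LEAST k. u \<in> nbhd k)"

lemma nbhd_depth: "u \<in> nbhd k \<Longrightarrow> u \<in> nbhd (depth u)"
  unfolding depth_def by (rule LeastI)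

lemma depth_le: "u \<in> nbhd k \<Longrightarrow> depth u \<le> k"
  unfolding depth_def by (rule Least_le)

lemma depth_eq_0_iff: "u \<in> nbhd k \<Longrightarrow> depth u = 0 \<longleftrightarrow> u \<in> R"
  using nbhd_depth[of u k] depth_le[of u 0] by auto

lemma not_in_nbhd_depth_minus_1: "u \<in> nbhd k \<Longrightarrow> u \<notin> R \<Longrightarrow> u \<notin> nbhd (depth u - 1)"
  using depth_le[of u "depth u - 1"] depth_eq_0_iff[of u k] by fastforce

lemma parent_edge_exists:
  assumes "u \<in> nbhd k" "u \<notin> R"
  shows "\<exists>e. e \<in> E \<and> u \<in> endpoints ends e \<and> endpoints ends e \<inter> nbhd (depth u - 1) \<noteq> {}"
proof -
  obtain j where j: "depth u = Suc j"
    using assms depth_eq_0_iff not0_implies_Suc by blast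
  have "u \<in> nbhd (Suc j)" "u \<notin> nbhd j"
    using nbhd_depth[OF assms(1)] not_in_nbhd_depth_minus_1[OF assms] j by simp_all
  then show ?thesis using j by (auto simp: nbhd.simps(2))
qed

definition parent_edge :: "'a \<Rightarrow> 'e" where
  "parent_edge u =
    (SOME e. e \<in> E \<and> u \<in> endpoints ends e \<and> endpoints ends e \<inter> nbhd (depth u - 1) \<noteq> {})"

definition parent :: "'a \<Rightarrow> 'a" where
  "parent u = (if u \<in> R then u else SOME w. w \<in> endpoints ends (parent_edge u) \<inter> nbhd (depth u - 1))"

lemma parent_edge_props:
  assumes "u \<in> nbhd k" "u \<notin> R"
  shows "parent_edge u \<in> E" "u \<in> endpoints ends (parent_edge u)"
    "parent u \<in> endpoints ends (parent_edge u)" "parent u \<in> nbhd (depth u - 1)"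
proof -
  have h: "parent_edge u \<in> E \<and> u \<in> endpoints ends (parent_edge u) \<and>
      endpoints ends (parent_edge u) \<inter> nbhd (depth u - 1) \<noteq> {}"
    unfolding parent_edge_def by (rule someI_ex) (rule parent_edge_exists[OF assms])
  then show "parent_edge u \<in> E" "u \<in> endpoints ends (parent_edge u)" by auto
  have "parent u \<in> endpoints ends (parent_edge u) \<inter> nbhd (depth u - 1)"
    unfolding parent_def using assms(2) h by (simp add: some_in_eq del: Int_iff)
  then show "parent u \<in> endpoints ends (parent_edge u)" "parent u \<in> nbhd (depth u - 1)"
    by auto
qed

lemma parent_neq: "u \<in> nbhd k \<Longrightarrow> u \<notin> R \<Longrightarrow> parent u \<noteq> u"
  using parent_edge_props(4) not_in_nbhd_depth_minus_1 by metis

lemma endpoints_parent_edge: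
  "u \<in> nbhd k \<Longrightarrow> u \<notin> R \<Longrightarrow> endpoints ends (parent_edge u) = {u, parent u}"
  using parent_edge_props(2,3)[of u k] parent_neq[of u k] unfolding endpoints_def by auto

lemma parent_of_R: "u \<in> R \<Longrightarrow> parent u = u"
  by (simp add: parent_def)

lemma depth_parent: "u \<in> nbhd k \<Longrightarrow> parent u \<in> nbhd k \<and> depth (parent u) \<le> depth u - 1"
proof (cases "u \<in> R")
  case True
  assume "u \<in> nbhd k"
  then show ?thesis using True parent_of_R depth_eq_0_iff[of u k] by simp
next
  case False
  assume u: "u \<in> nbhd k"
  have parent_u: "parent u \<in> nbhd (depth u - 1)" using parent_edge_props(4)[OF u False] .
  moreover have "depth u - 1 \<le> k" using depth_le[OF u] by simp
  ultimately have "parent u \<in> nbhd k" using nbhd_mono by blast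
  then show ?thesis using depth_le[OF parent_u] by simp
qed

lemma inj_on_parent_edge: "inj_on parent_edge (nbhd k - R)"
proof (rule inj_onI)
  fix u v assume u: "u \<in> nbhd k - R" and v: "v \<in> nbhd k - R"
    and eq: "parent_edge u = parent_edge v"
  show "u = v"
  proof (rule ccontr)
    assume "u \<noteq> v"
    have "{u, parent u} = {v, parent v}"
      using endpoints_parent_edge[of u k] endpoints_parent_edge[of v k] u v eq by auto
    then have "v = parent u" "u = parent v" using \<open>u \<noteq> v\<close> by (auto simp: doubleton_eq_iff)
    then have "depth v < depth u" "depth u < depth v"
      using depth_parent[of u k] depth_parent[of v k] u v depth_eq_0_iff[of u k]
        depth_eq_0_iff[of v k] by auto
    then show False by simp
  qed
qed

lemma funpow_parent:
  "x \<in> nbhd k \<Longrightarrow> (parent ^^ i) x \<in> nbhd k \<and> depth ((parent ^^ i) x) \<le> depth x - i"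
proof (induction i)
  case (Suc i)
  then show ?case using depth_parent[of "(parent ^^ i) x" k] by auto
qed simp

lemma funpow_parent_in_R: "x \<in> nbhd k \<Longrightarrow> depth x \<le> i \<Longrightarrow> (parent ^^ i) x \<in> R"
  using funpow_parent[of x k i] depth_eq_0_iff[of "(parent ^^ i) x" k] by auto

definition ancestors :: "'a \<Rightarrow> 'a set" where
  "ancestors x = (\<lambda>i. (parent ^^ i) x) ` {..<depth x} - R"

lemma card_ancestors_le: "card (ancestors x) \<le> depth x"
proof -
  have "card (ancestors x) \<le> card ((\<lambda>i. (parent ^^ i) x) ` {..<depth x})"
    unfolding ancestors_def by (rule card_mono) auto
  also have "\<dots> \<le> depth x" using card_image_le[of "{..<depth x}"] by simp
  finally show ?thesis .
qed

lemma ancestors_subset_nbhd: "x \<in> nbhd k \<Longrightarrow> ancestors x \<subseteq> nbhd k"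
  unfolding ancestors_def using funpow_parent by blast

lemma self_in_ancestors: "x \<in> nbhd k \<Longrightarrow> x \<in> R \<union> ancestors x"
  using depth_eq_0_iff[of x k] by (force simp: ancestors_def)

lemma parent_in_ancestors:
  assumes "x \<in> nbhd k" "y \<in> ancestors x"
  shows "parent y \<in> R \<union> ancestors x"
proof -
  obtain i where i: "i < depth x" "y = (parent ^^ i) x"
    using assms(2) by (auto simp: ancestors_def)
  have parent_y: "parent y = (parent ^^ Suc i) x" using i by simp
  show ?thesis
  proof (cases "Suc i < depth x")
    case True
    then have "parent y \<in> (\<lambda>i. (parent ^^ i) x) ` {..<depth x}"
      using parent_y by (metis lessThan_iff image_eqI)
    then show ?thesis by (auto simp: ancestors_def)
  next
    case False
    then show ?thesis using funpow_parent_in_R[OF assms(1), of "Suc i"] parent_y by simp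
  qed
qed

lemma card_edges_within_tree_extension:
  assumes "R \<subseteq> P" "P \<subseteq> nbhd k" and closed: "\<forall>y\<in>P - R. parent y \<in> P"
    and f: "f \<in> es P" "f \<notin> es R" "f \<notin> parent_edge ` (P - R)"
  shows "card (es R) + card (P - R) + 1 \<le> card (es P)"
proof -
  have tree_edges: "parent_edge ` (P - R) \<subseteq> es P - es R"
  proof
    fix e assume "e \<in> parent_edge ` (P - R)"
    then obtain y where y: "y \<in> P - R" "e = parent_edge y" by auto
    then have "y \<in> nbhd k" using assms(2) by auto
    then show "e \<in> es P - es R"
      using y closed parent_edge_props[of y k] endpoints_parent_edge[of y k]
      by (auto simp: edges_within_def)
  qed
  have "finite P" using assms(2) finite_nbhd finite_subset by blast
  have "inj_on parent_edge (P - R)"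
    by (rule inj_on_subset[OF inj_on_parent_edge[of k]]) (use assms(2) in auto)
  then have "card (es R \<union> parent_edge ` (P - R)) = card (es R) + card (P - R)"
    using tree_edges \<open>finite P\<close> finite_E by (subst card_Un_disjoint) (auto simp: card_image)
  then have "card (insert f (es R \<union> parent_edge ` (P - R))) = card (es R) + card (P - R) + 1"
    using f \<open>finite P\<close> finite_E by simp
  moreover have "card (insert f (es R \<union> parent_edge ` (P - R))) \<le> card (es P)"
    using tree_edges edges_within_mono[OF assms(1), of E ends] f finite_E by (intro card_mono) auto
  ultimately show ?thesis by simp
qed

definition tree_like :: "nat \<Rightarrow> bool" where
  "tree_like D \<longleftrightarrow> es (nbhd D) - es R \<subseteq> parent_edge ` (nbhd D - R)"

lemma tree_like_parent_edge:
  assumes "tree_like D" "k \<le> D" "e \<in> es (nbhd k) - es R"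
  shows "\<exists>y \<in> nbhd k - R. e = parent_edge y"
proof -
  have "e \<in> es (nbhd D)"
    using assms(3) edges_within_mono[OF nbhd_mono[OF assms(2)], of E ends] by blast
  then obtain y where y: "y \<in> nbhd D - R" "e = parent_edge y"
    using assms(1,3) by (auto simp: tree_like_def)
  then have "y \<in> endpoints ends e" using parent_edge_props(2)[of y D] by auto
  then have "y \<in> nbhd k" using assms(3) by (auto simp: edges_within_def)
  then show ?thesis using y by auto
qed

lemma child_of_R_exists: "\<exists>w. w \<in> nbhd 1 - R \<and> parent w \<in> R"
proof -
  obtain e w where "e \<in> E" "endpoints ends e \<inter> R \<noteq> {}" "w \<in> endpoints ends e" and w: "w \<notin> R"
    using edge_leaving_R by blast
  then have "w \<in> nbhd 1" by (auto simp: nbhd.simps(2))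
  moreover from this have "depth w = 1"
    using depth_le[of w 1] depth_eq_0_iff[of w 1] w by simp
  ultimately show ?thesis using depth_parent[of w 1] depth_eq_0_iff[of "parent w" 1] w by auto
qed

text \<open>Every incidence of a vertex u of X is an incidence of a tree edge, either u's own or that of
  a child of u in Y; the child w of R is nobody's child in X. Hence 3 |X| \<le> |X| + |Y| - 1.\<close>

lemma card_nbhd_doubling:
  assumes "tree_like D" "Suc k \<le> D" "1 \<le> k"
  shows "2 * card (nbhd k - R) + 1 \<le> card (nbhd (Suc k) - R)"
proof -
  define X where "X = nbhd k - R"
  define Y where "Y = nbhd (Suc k) - R"
  obtain w where w: "w \<in> nbhd 1 - R" "parent w \<in> R" using child_of_R_exists by blast
  have "w \<in> Y" using w nbhd_mono[of 1 "Suc k"] assms(3) by (auto simp: Y_def)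
  have "(SIGMA u:X. {e\<in>E. u \<in> endpoints ends e}) \<subseteq>
      (\<lambda>u. (u, parent_edge u)) ` X \<union> (\<lambda>y. (parent y, parent_edge y)) ` (Y - {w})"
  proof
    fix q assume "q \<in> (SIGMA u:X. {e\<in>E. u \<in> endpoints ends e})"
    then obtain u e where q: "q = (u, e)" and u: "u \<in> X" and e: "e \<in> E" "u \<in> endpoints ends e"
      by blast
    have "e \<in> es (nbhd (Suc k)) - es R" using u e by (auto simp: X_def edges_within_def nbhd.simps(2))
    then obtain y where y: "y \<in> Y" "e = parent_edge y"
      using tree_like_parent_edge[OF assms(1,2)] unfolding Y_def by blast
    then have "u = y \<or> u = parent y"
      using e(2) endpoints_parent_edge[of y "Suc k"] by (auto simp: Y_def)
    moreover have "y \<noteq> w" if "u = parent y" using that u w by (auto simp: X_def)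
    ultimately show "q \<in> (\<lambda>u. (u, parent_edge u)) ` X \<union> (\<lambda>y. (parent y, parent_edge y)) ` (Y - {w})"
      using q u y by auto
  qed
  then have "card (SIGMA u:X. {e\<in>E. u \<in> endpoints ends e}) \<le>
      card ((\<lambda>u. (u, parent_edge u)) ` X \<union> (\<lambda>y. (parent y, parent_edge y)) ` (Y - {w}))"
    by (intro card_mono) (simp_all add: X_def Y_def)
  also have "\<dots> \<le> card X + card (Y - {w})"
    by (intro order_trans[OF card_Un_le] add_mono card_image_le) (simp_all add: X_def Y_def)
  finally have "card (SIGMA u:X. {e\<in>E. u \<in> endpoints ends e}) \<le> card X + card (Y - {w})" .
  moreover have "3 * card X \<le> card (SIGMA u:X. {e\<in>E. u \<in> endpoints ends e})"
    using nbhd_subset_W by (intro three_card_le_incidences) (auto simp: X_def)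
  moreover have "card (Y - {w}) < card Y"
    using \<open>w \<in> Y\<close> by (intro card_Diff1_less) (simp_all add: Y_def)
  ultimately show ?thesis unfolding X_def Y_def by linarith
qed

lemma card_nbhd_exponential:
  assumes "tree_like D" "k \<le> D"
  shows "2 ^ k \<le> card (nbhd k - R) + 1"
  using assms(2)
proof (induction k)
  case (Suc k)
  show ?case
  proof (cases "k = 0")
    case True
    have "nbhd 1 - R \<noteq> {}" using child_of_R_exists by blast
    then show ?thesis using True by (simp add: Suc_le_eq card_gt_0_iff)
  next
    case False
    then show ?thesis using card_nbhd_doubling[OF assms(1) Suc.prems] Suc by simp
  qed
qed simp

lemma not_tree_like:
  assumes "card W < 2 ^ D"
  shows "\<not> tree_like D"
proof
  assume "tree_like D"
  have "nbhd D - R \<subset> nbhd D" using R_subset_nbhd R_nonempty by blast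
  then have "card (nbhd D - R) < card (nbhd D)" by (simp add: psubset_card_mono)
  also have "\<dots> \<le> card W" using nbhd_subset_W finite_W by (simp add: card_mono)
  finally show False
    using card_nbhd_exponential[OF \<open>tree_like D\<close> order_refl] assms by linarith
qed

text \<open>An edge f spanned by nbhd D that is not a tree edge closes a cycle together with the tree
  paths from its endpoints back to R.\<close>

lemma excess_increment:
  assumes "card W < 2 ^ D"
  shows "\<exists>R'. R \<subseteq> R' \<and> R' \<subseteq> W \<and> card R' \<le> card R + 2 * D \<and> excess R + 1 \<le> excess R'"
proof -
  obtain f where f: "f \<in> es (nbhd D)" "f \<notin> es R" "f \<notin> parent_edge ` (nbhd D - R)"
    using not_tree_like[OF assms] by (auto simp: tree_like_def)
  define a where "a = fst (ends f)"
  define b where "b = snd (ends f)"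
  have ab: "a \<in> nbhd D" "b \<in> nbhd D"
    using f(1) by (auto simp: edges_within_def endpoints_def a_def b_def)
  define P where "P = R \<union> ancestors a \<union> ancestors b"
  have "R \<subseteq> P" by (auto simp: P_def)
  have "P \<subseteq> nbhd D" using R_subset_nbhd ancestors_subset_nbhd ab by (auto simp: P_def)
  have "finite P" using \<open>P \<subseteq> nbhd D\<close> finite_nbhd by (rule finite_subset)
  have "finite R" using \<open>R \<subseteq> P\<close> \<open>finite P\<close> by (rule finite_subset)
  have "\<forall>y\<in>P - R. parent y \<in> P"
    using parent_in_ancestors[OF ab(1)] parent_in_ancestors[OF ab(2)] by (auto simp: P_def)
  moreover have "f \<in> es P"
    using f(1) self_in_ancestors[OF ab(1)] self_in_ancestors[OF ab(2)]
    by (auto simp: edges_within_def endpoints_def P_def a_def b_def)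
  moreover have "f \<notin> parent_edge ` (P - R)" using f(3) \<open>P \<subseteq> nbhd D\<close> by auto
  ultimately have "card (es R) + card (P - R) + 1 \<le> card (es P)"
    using card_edges_within_tree_extension[OF \<open>R \<subseteq> P\<close> \<open>P \<subseteq> nbhd D\<close>] f(2) by blast
  moreover have "card P = card R + card (P - R)"
    using card_Diff_subset[OF \<open>finite R\<close> \<open>R \<subseteq> P\<close>] card_mono[OF \<open>finite P\<close> \<open>R \<subseteq> P\<close>]
    by linarith
  ultimately have "excess R + 1 \<le> excess P" by (simp add: excess_def)
  have "card P \<le> card R + card (ancestors a) + card (ancestors b)"
    unfolding P_def using card_Un_le[of "R \<union> ancestors a" "ancestors b"] card_Un_le[of R "ancestors a"]
    by linarith
  moreover have "card (ancestors a) \<le> D" "card (ancestors b) \<le> D"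
    using card_ancestors_le[of a] card_ancestors_le[of b] depth_le[OF ab(1)] depth_le[OF ab(2)]
    by linarith+
  ultimately have "card P \<le> card R + 2 * D" by linarith
  moreover have "P \<subseteq> W" using \<open>P \<subseteq> nbhd D\<close> nbhd_subset_W by blast
  ultimately show ?thesis using \<open>excess R + 1 \<le> excess P\<close> \<open>R \<subseteq> P\<close> by blast
qed

end

context min_degree_three
begin

text \<open>The invariant of the greedy growth: the vertices of R are paid for by its excess, at
  2D + 1 vertices per unit, up to the target excess g.\<close>

definition admissible :: "nat \<Rightarrow> int \<Rightarrow> 'a set \<Rightarrow> bool" where
  "admissible D g R \<longleftrightarrow> R \<subseteq> W \<and> int (card R) \<le> (2 * int D + 1) * (min (excess R) g + 1) + 1"

lemma admissible_empty: "0 \<le> g \<Longrightarrow> admissible D g {}"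
  by (simp add: admissible_def)

lemma admissible_extend_open:
  assumes "card W < 2 ^ D" "admissible D g R" "excess R < g"
    and "\<exists>e\<in>E. endpoints ends e \<inter> R \<noteq> {} \<and> \<not> endpoints ends e \<subseteq> R"
  shows "\<exists>R'. R \<subset> R' \<and> admissible D g R'"
proof -
  interpret bfs W E ends R
    using assms(2,4) by unfold_locales (auto simp: admissible_def)
  obtain R' where R': "R \<subseteq> R'" "R' \<subseteq> W" "card R' \<le> card R + 2 * D" "excess R + 1 \<le> excess R'"
    using excess_increment[OF assms(1)] by blast
  have "int (card R') \<le> (2 * int D + 1) * (excess R + 1) + 1 + 2 * int D"
    using R'(3) assms(2,3) by (simp add: admissible_def)
  also have "\<dots> = (2 * int D + 1) * (excess R + 2)" by (simp add: algebra_simps)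
  also have "\<dots> \<le> (2 * int D + 1) * (min (excess R') g + 1)"
    using R'(4) assms(3) by (intro mult_left_mono) auto
  finally have "admissible D g R'" using R'(2) by (simp add: admissible_def)
  moreover have "R \<noteq> R'" using R'(4) by auto
  ultimately show ?thesis using R'(1) by blast
qed

lemma admissible_extend_closed:
  assumes "1 \<le> D" "g \<le> excess W" "admissible D g R" "excess R < g"
    and "\<forall>e\<in>E. endpoints ends e \<inter> R \<noteq> {} \<longrightarrow> endpoints ends e \<subseteq> R"
  shows "\<exists>R'. R \<subset> R' \<and> admissible D g R'"
proof -
  have "R \<subseteq> W" using assms(3) by (simp add: admissible_def)
  have R_small: "int (card R) \<le> 2 * excess R"
    using card_le_twice_excess_if_closed[OF \<open>R \<subseteq> W\<close> assms(5)] .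
  have "R \<noteq> W" using assms(2,4) by auto
  then obtain v where v: "v \<in> W" "v \<notin> R" using \<open>R \<subseteq> W\<close> by blast
  define R' where "R' = insert v R"
  have "finite R" using \<open>R \<subseteq> W\<close> finite_W finite_subset by blast
  then have "int (card R') = int (card R) + 1" using v by (simp add: R'_def)
  moreover have "card (es R) \<le> card (es R')"
    using finite_E by (intro card_mono edges_within_mono) (auto simp: R'_def)
  ultimately have "excess R - 1 \<le> min (excess R') g"
    using assms(4) by (simp add: excess_def)
  then have "(2 * int D + 1) * excess R \<le> (2 * int D + 1) * (min (excess R') g + 1)"
    by (intro mult_left_mono) auto
  moreover have "2 * excess R \<le> (2 * int D + 1) * excess R"
    using R_small assms(1) by (intro mult_right_mono) auto
  ultimately have "int (card R') \<le> (2 * int D + 1) * (min (excess R') g + 1) + 1"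
    using R_small \<open>int (card R') = int (card R) + 1\<close> by linarith
  then have "admissible D g R'" using v(1) \<open>R \<subseteq> W\<close> by (simp add: admissible_def R'_def)
  then show ?thesis using v(2) by (auto simp: R'_def)
qed

lemma admissible_reaches_excess:
  assumes "card W < 2 ^ D" "1 \<le> D" "g \<le> excess W"
  shows "admissible D g R \<Longrightarrow> \<exists>S. admissible D g S \<and> g \<le> excess S"
proof (induction "card (W - R)" arbitrary: R rule: less_induct)
  case less
  show ?case
  proof (cases "g \<le> excess R")
    case False
    then have "excess R < g" by simp
    then obtain R' where "R \<subset> R'" "admissible D g R'"
      using admissible_extend_open[OF assms(1) less.prems] admissible_extend_closed[OF assms(2,3) less.prems]
      by (cases "\<exists>e\<in>E. endpoints ends e \<inter> R \<noteq> {} \<and> \<not> endpoints ends e \<subseteq> R") blast+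
    moreover from this have "card (W - R') < card (W - R)"
      using finite_W by (intro psubset_card_mono) (auto simp: admissible_def)
    ultimately show ?thesis using less.hyps by blast
  qed (use less.prems in blast)
qed

lemma small_set_of_large_excess:
  assumes "card W < 2 ^ D" "1 \<le> g" "g \<le> excess W"
  shows "\<exists>S\<subseteq>W. int (card S) \<le> (2 * int D + 1) * (g + 1) + 1 \<and> g \<le> excess S"
proof -
  have "W \<noteq> {}" using assms(2,3) by (auto simp: excess_def)
  then have "1 \<le> D" using assms(1) finite_W by (cases D) (auto simp: card_gt_0_iff)
  then obtain S where "admissible D g S" "g \<le> excess S"
    using admissible_reaches_excess[OF assms(1) _ assms(3) admissible_empty] assms(2) by fastforce
  then show ?thesis by (auto simp: admissible_def)
qed

end

lemma small_dense_set_exists: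
  fixes E :: "'e set" and ends :: "'e \<Rightarrow> 'a \<times> 'a" and g :: nat
  assumes "finite E" "finite V" "card V < 2 ^ D" "1 \<le> g"
    and "2 * card V + g + 1 \<le> card (edges_within E ends V)"
  shows "\<exists>S\<subseteq>V. card S \<le> (2 * D + 1) * (g + 1) + 1 \<and> card S + g \<le> card (edges_within E ends S)"
proof -
  obtain W where W: "W \<subseteq> V" "2 * card W + (g + 1) \<le> card (edges_within E ends W)"
      "\<forall>u\<in>W. 3 \<le> degree (edges_within E ends W) ends u"
    using min_degree_three_subgraph_exists[OF assms(1,2), where k = "g + 1" and ends = ends] assms(5) by auto
  have "finite W" using W(1) assms(2) by (rule finite_subset)
  interpret min_degree_three W "edges_within E ends W" ends
    using W(3) \<open>finite W\<close> assms(1) by unfold_locales (auto simp: edges_within_def)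
  have "card W < 2 ^ D" using card_mono[OF assms(2) W(1)] assms(3) by simp
  moreover have "int g \<le> excess W"
    using W(2) by (simp add: excess_def edges_within_edges_within)
  ultimately obtain S where S: "S \<subseteq> W" "g \<le> excess S"
      "int (card S) \<le> (2 * int D + 1) * (int g + 1) + 1"
    using small_set_of_large_excess[of D "int g"] assms(4) by auto
  have "int (card S) \<le> int ((2 * D + 1) * (g + 1) + 1)" using S(3) by (simp add: algebra_simps)
  then have "card S \<le> (2 * D + 1) * (g + 1) + 1" by (simp only: of_nat_le_iff)
  moreover have "card S + g \<le> card (edges_within E ends S)"
    using S(1,2) by (simp add: excess_def edges_within_edges_within Int_absorb1)
  ultimately show ?thesis using S(1) W(1) by (intro exI[of _ S]) auto
qed

lemma floorlog_le_log:
  assumes "0 < s" "1 < b"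
  shows "real (floorlog b s) \<le> log (real b) (real s) + 1"
  using assms by (simp add: floorlog_def)

lemma budget_le_log_bound:
  fixes D L g :: real
  assumes "2 \<le> L" "D \<le> L + 1" "1 \<le> g"
  shows "(2 * D + 1) * (g + 1) + 1 \<le> 8 * g * L"
proof -
  have "(2 * D + 1) * (g + 1) \<le> (2 * L + 3) * (g + 1)"
    using assms by (intro mult_right_mono) auto
  moreover have "0 \<le> (6 * g - 2) * (L - 2)" using assms by simp
  moreover have "8 * g * L = (2 * L + 3) * (g + 1) + 1 + (6 * g - 2) * (L - 2) + (9 * g - 8)"
    by (simp add: algebra_simps)
  ultimately show ?thesis using assms(3) by linarith
qed

lemma floorlog_budget_le_log:
  assumes "4 \<le> s" "1 \<le> g"
  shows "real ((2 * floorlog 2 s + 1) * (g + 1) + 1) \<le> 8 * real g * log 2 (real s)"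
proof -
  have "log 2 4 \<le> log 2 (real s)" using assms(1) by (intro log_mono) auto
  moreover have "log 2 (4 :: real) = 2" using log_pow_cancel[of 2 2] by simp
  ultimately have "2 \<le> log 2 (real s)" by simp
  have "real ((2 * floorlog 2 s + 1) * (g + 1) + 1) = (2 * real (floorlog 2 s) + 1) * (real g + 1) + 1"
    by (simp add: algebra_simps)
  also have "\<dots> \<le> 8 * real g * log 2 (real s)"
    using floorlog_le_log[of s 2] assms by (intro budget_le_log_bound \<open>2 \<le> log 2 (real s)\<close>) auto
  finally show ?thesis .
qed

theorem lemma3p2:
  fixes V :: "'a set" and E :: "'e set" and ends :: "'e \<Rightarrow> 'a \<times> 'a"
    and s m g :: nat
  assumes "multigraph V E ends"
    and "card V = s" and "s \<ge> 2"
    and "card E = m"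
    and "g \<ge> 1"
    and "m \<ge> 2 * s + g + 1"
  shows "\<exists>S\<subseteq>V. real (card S) \<le> 8 * real g * log 2 (real s)
           \<and> spanned_edges E ends S \<ge> card S + g"
proof -
  have "finite V" "finite E" and E_V: "edges_within E ends V = E"
    using assms(1) by (auto simp: multigraph_def edges_within_def endpoints_def)
  show ?thesis
  proof (cases "s \<le> 3")
    case True
    have "1 * 1 \<le> real g * log 2 (real s)" using assms(3,5) by (intro mult_mono) auto
    then have "real (card V) \<le> 8 * real g * log 2 (real s)" using True assms(2) by simp
    then show ?thesis using assms(2,4,6) E_V by (auto simp: spanned_edges_eq_card_edges_within)
  next
    case False
    have "card V < 2 ^ floorlog 2 s" using floorlog_bounds[of s 2] assms(2,3) by simp
    moreover have "2 * card V + g + 1 \<le> card (edges_within E ends V)" using E_V assms(2,4,6) by simp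
    ultimately obtain S where S: "S \<subseteq> V" "card S \<le> (2 * floorlog 2 s + 1) * (g + 1) + 1"
        "card S + g \<le> card (edges_within E ends S)"
      using small_dense_set_exists[OF \<open>finite E\<close> \<open>finite V\<close> _ assms(5)] by blast
    have "real (card S) \<le> real ((2 * floorlog 2 s + 1) * (g + 1) + 1)" using S(2) by (rule of_nat_mono)
    also have "\<dots> \<le> 8 * real g * log 2 (real s)"
      using False assms(5) by (intro floorlog_budget_le_log) auto
    finally have "real (card S) \<le> 8 * real g * log 2 (real s)" .
    then show ?thesis using S(1,3) by (auto simp: spanned_edges_eq_card_edges_within)
  qed
qed

end
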